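(* Suppose the validators who violate at least one of the slashing conditions I or II have total deposit strictly less than $\frac{1}{3}$ of the total deposit. Then no two conflicting checkpoints can both be finalized. Equivalently: if two conflicting checkpoints are both finalized, then validators holding at least $\frac13$ of the total deposit have violated slashing condition I or II.
   Context: Checkpoints form a rooted tree (the checkpoint tree) with root $r$. For a checkpoint $c$, its height $h(c)$ is the number of edges on the path from $c$ to $r$, so $h(r)=0$ and a child has height one more than its parent. Two checkpoints are conflicting if neither is an ancestor (or equal to, or a descendant) of the other. There is a fixed finite set of validators, each with a positive deposit; fractions of validators are always deposit-weighted. A vote is a signed message $\langle \nu, s, t, h(s), h(t)\rangle$ from validator $\nu$, where $s$ (source) and $t$ (target) are checkpoints and $s$ is a strict ancestor of $t$. A supermajority link $s\to t$ is an ordered pair of checkpoints such that validators holding at least $\frac23$ of the total deposit have published the vote with source $s$ and target $t$. A checkpoint $c$ is justified if $c=r$ or there is a supermajority link $c'\to c$ with $c'$ justified. A checkpoint $c$ is finalized if $c=r$, or $c$ is justified and there is a supermajority link $c\to c'$ where $c'$ is a direct child of $c$ in the checkpoint tree (so $h(c')=h(c)+1$). Slashing conditions: a validator $\nu$ violates a slashing condition if it publishes two distinct votes $\langle \nu,s_1,t_1,h(s_1),h(t_1)\rangle$ and $\langle \nu,s_2,t_2,h(s_2),h(t_2)\rangle$ such that either (I) $h(t_1)=h(t_2)$, or (II) $h(s_1)<h(s_2)<h(t_2)<h(t_1)$. *)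

theory Defs
  imports Complex_Main
begin

definition checkpoint_tree :: "('c \<Rightarrow> 'c) \<Rightarrow> 'c \<Rightarrow> bool" where
  "checkpoint_tree par r \<longleftrightarrow> par r = r \<and> (\<forall>c. \<exists>n. (par ^^ n) c = r)"

definition anc :: "('c \<Rightarrow> 'c) \<Rightarrow> 'c \<Rightarrow> 'c \<Rightarrow> bool" where
  "anc par a c \<longleftrightarrow> (\<exists>n. (par ^^ n) c = a)"

definition strict_anc :: "('c \<Rightarrow> 'c) \<Rightarrow> 'c \<Rightarrow> 'c \<Rightarrow> bool" where
  "strict_anc par a c \<longleftrightarrow> anc par a c \<and> a \<noteq> c"

definition height :: "('c \<Rightarrow> 'c) \<Rightarrow> 'c \<Rightarrow> 'c \<Rightarrow> nat" where
  "height par r c = (LEAST n. (par ^^ n) c = r)"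

definition is_child :: "('c \<Rightarrow> 'c) \<Rightarrow> 'c \<Rightarrow> 'c \<Rightarrow> 'c \<Rightarrow> bool" where
  "is_child par r c c' \<longleftrightarrow> c' \<noteq> r \<and> par c' = c"

definition conflicting :: "('c \<Rightarrow> 'c) \<Rightarrow> 'c \<Rightarrow> 'c \<Rightarrow> bool" where
  "conflicting par a b \<longleftrightarrow> \<not> anc par a b \<and> \<not> anc par b a"

(* Votes: a set of triples (validator, source, target); the heights in the message
   are determined by source and target. *)
definition well_formed_votes ::
  "('c \<Rightarrow> 'c) \<Rightarrow> 'v set \<Rightarrow> ('v \<times> 'c \<times> 'c) set \<Rightarrow> bool" where
  "well_formed_votes par V votes \<longleftrightarrow>
     (\<forall>(v, s, t) \<in> votes. v \<in> V \<and> strict_anc par s t)"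

definition sm_link ::
  "'v set \<Rightarrow> ('v \<Rightarrow> real) \<Rightarrow> ('v \<times> 'c \<times> 'c) set \<Rightarrow> 'c \<Rightarrow> 'c \<Rightarrow> bool" where
  "sm_link V w votes s t \<longleftrightarrow>
     (\<Sum>v \<in> {v \<in> V. (v, s, t) \<in> votes}. w v) \<ge> 2/3 * (\<Sum>v \<in> V. w v)"

inductive justified ::
  "'c \<Rightarrow> 'v set \<Rightarrow> ('v \<Rightarrow> real) \<Rightarrow> ('v \<times> 'c \<times> 'c) set \<Rightarrow> 'c \<Rightarrow> bool"
  for r V w votes where
  root: "justified r V w votes r"
| step: "justified r V w votes c' \<Longrightarrow> sm_link V w votes c' c \<Longrightarrow> justified r V w votes c"

definition finalized ::
  "('c \<Rightarrow> 'c) \<Rightarrow> 'c \<Rightarrow> 'v set \<Rightarrow> ('v \<Rightarrow> real) \<Rightarrow> ('v \<times> 'c \<times> 'c) set \<Rightarrow> 'c \<Rightarrow> bool" where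
  "finalized par r V w votes c \<longleftrightarrow>
     c = r \<or> (justified r V w votes c \<and>
               (\<exists>c'. is_child par r c c' \<and> sm_link V w votes c c'))"

definition slashed ::
  "('c \<Rightarrow> 'c) \<Rightarrow> 'c \<Rightarrow> ('v \<times> 'c \<times> 'c) set \<Rightarrow> 'v \<Rightarrow> bool" where
  "slashed par r votes v \<longleftrightarrow>
     (\<exists>s1 t1 s2 t2. (v, s1, t1) \<in> votes \<and> (v, s2, t2) \<in> votes \<and> (s1, t1) \<noteq> (s2, t2) \<and>
        (height par r t1 = height par r t2 \<or>
         (height par r s1 < height par r s2 \<and> height par r s2 < height par r t2 \<and>
          height par r t2 < height par r t1)))"

end

theory Submission
  imports Defs
begin

text \<open>
  Let \<open>a\<close> and \<open>b\<close> be conflicting finalized checkpoints with \<open>h(a) \<le> h(b)\<close>; \<open>a\<close> is finalized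
  through links \<open>x \<rightarrow> a\<close> and \<open>a \<rightarrow> a'\<close> with \<open>h(a') = h(a) + 1\<close>. Follow the chain of
  supermajority links that justifies \<open>b\<close> back from \<open>b\<close> towards the root, and stop at the
  first link \<open>c' \<rightarrow> c\<close> with \<open>h(c') < h(a) \<le> h(c)\<close>; \<open>c\<close> is no descendant of \<open>a\<close>. If
  \<open>h(c) = h(a)\<close> or \<open>h(c) = h(a')\<close>, this link has the same target height as \<open>x \<rightarrow> a\<close> or
  \<open>a \<rightarrow> a'\<close> (condition I); otherwise \<open>a \<rightarrow> a'\<close> is nested strictly inside it (condition II).
  Any two supermajority links share voters of total weight at least \<open>1/3\<close>, and every
  common voter of two such links is slashed.
\<close>

lemma height_root: "height par r r = 0"
  unfolding height_def by (rule Least_eq_0) simp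

lemma height_parent:
  assumes tree: "checkpoint_tree par r" and "c \<noteq> r"
  shows "height par r c = Suc (height par r (par c))"
proof -
  obtain n where "(par ^^ n) c = r"
    using tree unfolding checkpoint_tree_def by blast
  then have "(LEAST n. (par ^^ n) c = r) = Suc (LEAST m. (par ^^ Suc m) c = r)"
    using \<open>c \<noteq> r\<close> by (intro Least_Suc) auto
  then show ?thesis
    unfolding height_def by (simp add: funpow_Suc_right del: funpow.simps)
qed

lemma height_child:
  assumes "checkpoint_tree par r" and "is_child par r c c'"
  shows "height par r c' = height par r c + 1"
  using assms height_parent unfolding is_child_def by fastforce

lemma anc_trans: "anc par a b \<Longrightarrow> anc par b c \<Longrightarrow> anc par a c"
  unfolding anc_def by (metis funpow_add o_apply)

lemma anc_root: "checkpoint_tree par r \<Longrightarrow> anc par r c"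
  unfolding checkpoint_tree_def anc_def by blast

definition slashing_pair :: "('c \<Rightarrow> 'c) \<Rightarrow> 'c \<Rightarrow> 'c \<Rightarrow> 'c \<Rightarrow> 'c \<Rightarrow> 'c \<Rightarrow> bool" where
  "slashing_pair par r s1 t1 s2 t2 \<longleftrightarrow> (s1, t1) \<noteq> (s2, t2) \<and>
     (height par r t1 = height par r t2 \<or>
      (height par r s1 < height par r s2 \<and> height par r s2 < height par r t2 \<and>
       height par r t2 < height par r t1))"

lemma slashed_iff_slashing_pair:
  "slashed par r votes v \<longleftrightarrow>
     (\<exists>s1 t1 s2 t2. (v, s1, t1) \<in> votes \<and> (v, s2, t2) \<in> votes \<and> slashing_pair par r s1 t1 s2 t2)"
  unfolding slashed_def slashing_pair_def by blast

lemma sm_link_strict_anc: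
  assumes "well_formed_votes par V votes" and "(\<Sum>v \<in> V. w v) > 0"
    and "sm_link V w votes s t"
  shows "strict_anc par s t"
proof -
  have "(\<Sum>v \<in> {v \<in> V. (v, s, t) \<in> votes}. w v) > 0"
    using assms(2,3) unfolding sm_link_def by linarith
  then have "{v \<in> V. (v, s, t) \<in> votes} \<noteq> {}"
    by (metis less_irrefl sum.empty)
  then show ?thesis
    using assms(1) unfolding well_formed_votes_def by blast
qed

lemma sm_links_common_voters:
  assumes "finite V" and "\<forall>v \<in> V. w v \<ge> 0"
    and "sm_link V w votes s1 t1" and "sm_link V w votes s2 t2"
  shows "1/3 * (\<Sum>v \<in> V. w v) \<le> (\<Sum>v \<in> {v \<in> V. (v, s1, t1) \<in> votes \<and> (v, s2, t2) \<in> votes}. w v)"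
proof -
  define A where "A = {v \<in> V. (v, s1, t1) \<in> votes}"
  define B where "B = {v \<in> V. (v, s2, t2) \<in> votes}"
  have "finite A" "finite B"
    using assms(1) unfolding A_def B_def by simp_all
  then have "sum w (A \<union> B) + sum w (A \<inter> B) = sum w A + sum w B"
    by (rule sum.union_inter)
  moreover have "sum w (A \<union> B) \<le> sum w V"
    using assms(1,2) unfolding A_def B_def by (intro sum_mono2) auto
  moreover have "2/3 * sum w V \<le> sum w A" "2/3 * sum w V \<le> sum w B"
    using assms(3,4) unfolding sm_link_def A_def B_def by simp_all
  ultimately have "1/3 * sum w V \<le> sum w (A \<inter> B)"
    by linarith
  moreover have "A \<inter> B = {v \<in> V. (v, s1, t1) \<in> votes \<and> (v, s2, t2) \<in> votes}"
    unfolding A_def B_def by blast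
  ultimately show ?thesis by simp
qed

lemma justified_beside_finalized_slashing_pair:
  assumes tree: "checkpoint_tree par r" and wf: "well_formed_votes par V votes"
    and total_pos: "(\<Sum>v \<in> V. w v) > 0"
    and into_a: "sm_link V w votes x a" and child: "is_child par r a a'"
    and out_of_a: "sm_link V w votes a a'" and "a \<noteq> r"
    and "justified r V w votes b" and "height par r a \<le> height par r b" and "\<not> anc par a b"
  shows "\<exists>s1 t1 s2 t2. sm_link V w votes s1 t1 \<and> sm_link V w votes s2 t2 \<and>
           slashing_pair par r s1 t1 s2 t2"
  using assms(8-10)
proof (induction b rule: justified.induct)
  case root
  then show ?case
    using height_parent[OF tree \<open>a \<noteq> r\<close>] height_root[of par r] by simp
next
  case (step c' c)
  have "strict_anc par c' c"
    using sm_link_strict_anc[OF wf total_pos step.hyps(2)] .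
  show ?case
  proof (cases "height par r a \<le> height par r c'")
    case True
    have "\<not> anc par a c'"
      using step.prems(2) \<open>strict_anc par c' c\<close> anc_trans unfolding strict_anc_def by metis
    then show ?thesis
      using step.IH True by blast
  next
    case below: False
    have height_a': "height par r a' = height par r a + 1"
      using height_child[OF tree child] .
    have "c \<noteq> a"
      using step.prems(2) unfolding anc_def by (metis funpow_0)
    consider "height par r c = height par r a" | "height par r c = height par r a'"
      | "height par r a' < height par r c"
      using step.prems(1) height_a' by linarith
    then show ?thesis
    proof cases
      case 1
      then have "slashing_pair par r c' c x a"
        using \<open>c \<noteq> a\<close> unfolding slashing_pair_def by simp
      then show ?thesis using step.hyps(2) into_a by blast
    next
      case 2
      then have "slashing_pair par r c' c a a'"
        using below unfolding slashing_pair_def by auto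
      then show ?thesis using step.hyps(2) out_of_a by blast
    next
      case 3
      then have "slashing_pair par r c' c a a'"
        using below height_a' unfolding slashing_pair_def by auto
      then show ?thesis using step.hyps(2) out_of_a by blast
    qed
  qed
qed

lemma conflicting_finalized_slashing_pair:
  assumes tree: "checkpoint_tree par r" and wf: "well_formed_votes par V votes"
    and total_pos: "(\<Sum>v \<in> V. w v) > 0"
    and "finalized par r V w votes a" "finalized par r V w votes b" "conflicting par a b"
  shows "\<exists>s1 t1 s2 t2. sm_link V w votes s1 t1 \<and> sm_link V w votes s2 t2 \<and>
           slashing_pair par r s1 t1 s2 t2"
proof -
  have lower:
    "\<exists>s1 t1 s2 t2. sm_link V w votes s1 t1 \<and> sm_link V w votes s2 t2 \<and>
       slashing_pair par r s1 t1 s2 t2"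
    if fa: "finalized par r V w votes a" and fb: "finalized par r V w votes b"
      and ab: "conflicting par a b" and "height par r a \<le> height par r b" for a b
  proof -
    have "a \<noteq> r"
      using ab anc_root[OF tree] unfolding conflicting_def by blast
    then obtain a' where ja: "justified r V w votes a"
      and child: "is_child par r a a'" and out_of_a: "sm_link V w votes a a'"
      using fa unfolding finalized_def by blast
    obtain x where "sm_link V w votes x a"
      using ja \<open>a \<noteq> r\<close> by (cases rule: justified.cases) auto
    moreover have "justified r V w votes b"
      using fb unfolding finalized_def by (auto intro: justified.root)
    ultimately show ?thesis
      using justified_beside_finalized_slashing_pair[OF tree wf total_pos _ child out_of_a
          \<open>a \<noteq> r\<close> _ that(4)] ab unfolding conflicting_def by blast
  qed
  show ?thesis
  proof (cases "height par r a \<le> height par r b")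
    case True
    then show ?thesis using lower assms(4-6) by blast
  next
    case False
    then show ?thesis
      using lower[of b a] assms(4-6) unfolding conflicting_def by simp
  qed
qed

theorem theorem1:
  fixes par :: "'c \<Rightarrow> 'c" and r :: 'c
    and V :: "'v set" and w :: "'v \<Rightarrow> real"
    and votes :: "('v \<times> 'c \<times> 'c) set"
    and a b :: 'c
  assumes tree: "checkpoint_tree par r"
    and finV: "finite V"
    and pos: "\<forall>v \<in> V. w v > 0"
    and wf: "well_formed_votes par V votes"
    and few_slashed:
      "(\<Sum>v \<in> {v \<in> V. slashed par r votes v}. w v) < 1/3 * (\<Sum>v \<in> V. w v)"
    and confl: "conflicting par a b"
  shows "\<not> (finalized par r V w votes a \<and> finalized par r V w votes b)"
proof
  assume "finalized par r V w votes a \<and> finalized par r V w votes b"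
  have nonneg: "\<forall>v \<in> V. w v \<ge> 0"
    using pos by auto
  then have "(\<Sum>v \<in> {v \<in> V. slashed par r votes v}. w v) \<ge> 0"
    by (intro sum_nonneg) auto
  then have "(\<Sum>v \<in> V. w v) > 0"
    using few_slashed by linarith
  then obtain s1 t1 s2 t2 where l1: "sm_link V w votes s1 t1" and l2: "sm_link V w votes s2 t2"
    and "slashing_pair par r s1 t1 s2 t2"
    using conflicting_finalized_slashing_pair[OF tree wf] confl
      \<open>finalized par r V w votes a \<and> finalized par r V w votes b\<close> by blast
  then have "{v \<in> V. (v, s1, t1) \<in> votes \<and> (v, s2, t2) \<in> votes} \<subseteq> {v \<in> V. slashed par r votes v}"
    unfolding slashed_iff_slashing_pair by blast
  then have "(\<Sum>v \<in> {v \<in> V. (v, s1, t1) \<in> votes \<and> (v, s2, t2) \<in> votes}. w v)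
      \<le> (\<Sum>v \<in> {v \<in> V. slashed par r votes v}. w v)"
    using finV nonneg by (intro sum_mono2) auto
  then show False
    using sm_links_common_voters[OF finV nonneg l1 l2] few_slashed by linarith
qed

end
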